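(* Let $G=(V,A)$ be a finite simple graph without loops and without isolated vertices and $\mathfrak n=\mathfrak n(G)$ its graph algebra, with center $\mathfrak z$. Then $(\Lambda^2\mathfrak n)^{\mathfrak n}=\Lambda^2\mathfrak z$ if and only if $|e|\ge 2$ for all $e\in V$.
   Context: Vertices $V=\{e_1,\dots,e_n\}$ are ordered; each edge joining $e_i,e_j$ ($i<j$) is oriented from $e_i$ to $e_j$. $\mathfrak n(G)$ (over a field of characteristic zero) has basis $V\cup A$, $[e_i,e_j]=\alpha$ if $\alpha$ goes from $e_i$ to $e_j$, $[e_i,e_j]=0$ if not adjacent, edges central; $\mathfrak z=\mathrm{span}(A)$. $|e|$ is the degree of $e$. $(\Lambda^2\mathfrak n)^{\mathfrak n}$ is the space of $\omega\in\Lambda^2\mathfrak n$ with $\mathrm{ad}_x\omega=0$ for all $x$, where $\mathrm{ad}_x(a\wedge b)=[x,a]\wedge b+a\wedge[x,b]$. *)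

theory Defs
  imports Main
begin

text \<open>Vertices carry a linear
order; an edge joining e_i and e_j with i < j is the pair (i, j) (oriented from e_i to e_j).\<close>

datatype 'v gbasis = Vert 'v | Edge 'v 'v

definition gbasis :: "'v set \<Rightarrow> ('v \<times> 'v) set \<Rightarrow> 'v gbasis set" where
  "gbasis V A = Vert ` V \<union> (\<lambda>(i, j). Edge i j) ` A"

definition galg :: "'v set \<Rightarrow> ('v \<times> 'v) set \<Rightarrow> ('v gbasis \<Rightarrow> 'k::field) set" where
  "galg V A = {x. \<forall>b. b \<notin> gbasis V A \<longrightarrow> x b = 0}"

text \<open>Lie bracket: [e_i, e_j] = alpha if alpha = (i,j) is an edge, bilinearly extended;
edges are central.\<close>
definition gbr :: "('v \<times> 'v) set \<Rightarrow> ('v gbasis \<Rightarrow> 'k::field) \<Rightarrow> ('v gbasis \<Rightarrow> 'k) \<Rightarrow> ('v gbasis \<Rightarrow> 'k)" where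
  "gbr A x y = (\<lambda>b. case b of
      Vert _ \<Rightarrow> 0
    | Edge i j \<Rightarrow> (if (i, j) \<in> A then x (Vert i) * y (Vert j) - x (Vert j) * y (Vert i) else 0))"

definition unitvec :: "'v gbasis \<Rightarrow> ('v gbasis \<Rightarrow> 'k::field)" where
  "unitvec b = (\<lambda>c. if c = b then 1 else 0)"

text \<open>Lambda^2 n: an element sum_{b<c} w b c (b wedge c) is encoded by its antisymmetric
coefficient function w, supported on basis x basis.\<close>
definition wedge2 :: "'v set \<Rightarrow> ('v \<times> 'v) set \<Rightarrow> ('v gbasis \<Rightarrow> 'v gbasis \<Rightarrow> 'k::field) set" where
  "wedge2 V A = {w. (\<forall>b c. w b c = - w c b) \<and>
      (\<forall>b c. b \<notin> gbasis V A \<or> c \<notin> gbasis V A \<longrightarrow> w b c = 0)}"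

text \<open>ad_x (a wedge b) = [x,a] wedge b + a wedge [x,b], in coefficient form.\<close>
definition ad2 :: "'v set \<Rightarrow> ('v \<times> 'v) set \<Rightarrow> ('v gbasis \<Rightarrow> 'k::field)
      \<Rightarrow> ('v gbasis \<Rightarrow> 'v gbasis \<Rightarrow> 'k) \<Rightarrow> ('v gbasis \<Rightarrow> 'v gbasis \<Rightarrow> 'k)" where
  "ad2 V A x w = (\<lambda>p q. \<Sum>b\<in>gbasis V A.
       w b q * gbr A x (unitvec b) p + w p b * gbr A x (unitvec b) q)"

definition invariants :: "'v set \<Rightarrow> ('v \<times> 'v) set \<Rightarrow> ('v gbasis \<Rightarrow> 'v gbasis \<Rightarrow> 'k::field) set" where
  "invariants V A = {w \<in> wedge2 V A. \<forall>x \<in> galg V A. ad2 V A x w = (\<lambda>p q. 0)}"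

definition center_basis :: "('v \<times> 'v) set \<Rightarrow> 'v gbasis set" where
  "center_basis A = (\<lambda>(i, j). Edge i j) ` A"

definition wedge2_center :: "'v set \<Rightarrow> ('v \<times> 'v) set \<Rightarrow> ('v gbasis \<Rightarrow> 'v gbasis \<Rightarrow> 'k::field) set" where
  "wedge2_center V A = {w \<in> wedge2 V A.
      \<forall>b c. b \<notin> center_basis A \<or> c \<notin> center_basis A \<longrightarrow> w b c = 0}"

definition vdegree :: "'v set \<Rightarrow> ('v \<times> 'v) set \<Rightarrow> 'v \<Rightarrow> nat" where
  "vdegree V A v = card {u \<in> V. (v, u) \<in> A \<or> (u, v) \<in> A}"

end

theory Submission
  imports Defs
begin

text \<open>Only brackets with vertices matter: edges are central, so Lambda^2 z is always invariant.
Conversely, testing ad_{e_a} w = 0 on pairs (e_c, alpha) and (alpha, beta) of basis vectors shows,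
for an invariant w, that w(e_c, e_u) = 0 as soon as u has a neighbour, and that
w(e_v, beta) = 0 as soon as v has a neighbour outside the endpoints of beta; if the only neighbours
of v are the two endpoints of beta, the three relations coming from the triangle force
2 w(e_v, beta) = 0. A vertex v of degree one with its unique edge alpha, on the other hand, gives the
non-central invariant e_v wedge alpha, because every bracket [x, e_v] is a multiple of alpha.\<close>

definition adjacent :: "('v \<times> 'v) set \<Rightarrow> 'v \<Rightarrow> 'v \<Rightarrow> bool" where
  "adjacent A u v \<longleftrightarrow> (u, v) \<in> A \<or> (v, u) \<in> A"

definition wedge :: "'v gbasis \<Rightarrow> 'v gbasis \<Rightarrow> 'v gbasis \<Rightarrow> 'v gbasis \<Rightarrow> 'k::field" where
  "wedge b c = (\<lambda>p q. if p = b \<and> q = c then 1 else if p = c \<and> q = b then -1 else 0)"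

lemma adjacent_sym: "adjacent A u v \<longleftrightarrow> adjacent A v u"
  unfolding adjacent_def by blast

lemma Vert_in_gbasis [simp]: "Vert u \<in> gbasis V A \<longleftrightarrow> u \<in> V"
  unfolding gbasis_def by auto

lemma Edge_in_gbasis [simp]: "Edge k l \<in> gbasis V A \<longleftrightarrow> (k, l) \<in> A"
  unfolding gbasis_def by auto

lemma Edge_in_center_basis [simp]: "Edge k l \<in> center_basis A \<longleftrightarrow> (k, l) \<in> A"
  unfolding center_basis_def by auto

lemma Vert_notin_center_basis [simp]: "Vert v \<notin> center_basis A"
  unfolding center_basis_def by auto

lemma gbr_Vert [simp]: "gbr A x y (Vert c) = 0"
  unfolding gbr_def by simp

lemma gbr_unitvec_Edge [simp]: "gbr A x (unitvec (Edge i j)) = (\<lambda>_. 0)"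
  unfolding gbr_def unitvec_def by (auto split: gbasis.splits)

lemma sum_gbr_unitvec_Vert:
  assumes "finite B" "Vert i \<in> B" "Vert j \<in> B" "(i, j) \<in> A"
  shows "(\<Sum>b\<in>B. h b * gbr A (unitvec (Vert a)) (unitvec b) (Edge i j))
     = (if a = i then h (Vert j) else 0) - (if a = j then h (Vert i) else 0)"
proof -
  have "(\<Sum>b\<in>B. h b * gbr A (unitvec (Vert a)) (unitvec b) (Edge i j))
     = (\<Sum>b\<in>B. (if b = Vert j then (if a = i then h b else 0) else 0)
               - (if b = Vert i then (if a = j then h b else 0) else 0))"
    using assms(4) by (intro sum.cong) (auto simp: gbr_def unitvec_def)
  also have "\<dots> = (if a = i then h (Vert j) else 0) - (if a = j then h (Vert i) else 0)"
    using assms(1-3) by (simp add: sum_subtractf sum.delta)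
  finally show ?thesis .
qed

lemma ad2_eq_sum:
  "ad2 V A x w p q = (\<Sum>b\<in>gbasis V A. w b q * gbr A x (unitvec b) p)
                    + (\<Sum>b\<in>gbasis V A. w p b * gbr A x (unitvec b) q)"
  unfolding ad2_def by (simp add: sum.distrib)

lemma invariants_antisym: "w \<in> invariants V A \<Longrightarrow> w b c = - w c b"
  unfolding invariants_def wedge2_def by blast

lemma invariants_outside_gbasis:
  "w \<in> invariants V A \<Longrightarrow> b \<notin> gbasis V A \<or> c \<notin> gbasis V A \<Longrightarrow> w b c = 0"
  unfolding invariants_def wedge2_def by blast

lemma invariants_ad2_Vert:
  assumes "w \<in> invariants V A" "a \<in> V"
  shows "ad2 V A (unitvec (Vert a)) w p q = 0"
proof -
  have "unitvec (Vert a) \<in> galg V A"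
    using assms(2) unfolding galg_def unitvec_def by auto
  then show ?thesis using assms(1) unfolding invariants_def by auto
qed

lemma wedge2_center_subset_invariants: "wedge2_center V A \<subseteq> invariants V A"
proof
  fix w assume w: "w \<in> wedge2_center V A"
  have central: "w b c = 0" if "b \<notin> center_basis A \<or> c \<notin> center_basis A" for b c
    using w that unfolding wedge2_center_def by auto
  have "ad2 V A x w = (\<lambda>p q. 0)" for x
  proof (intro ext)
    fix p q
    have "w b q * gbr A x (unitvec b) p + w p b * gbr A x (unitvec b) q = 0" for b
    proof (cases "b \<in> center_basis A")
      case True
      then show ?thesis unfolding center_basis_def by auto
    qed (simp add: central)
    then show "ad2 V A x w p q = 0" unfolding ad2_def by simp
  qed
  then show "w \<in> invariants V A"
    using w unfolding invariants_def wedge2_center_def by simp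
qed

lemma wedge_Vert_Edge_notin_wedge2_center:
  "(wedge (Vert v) (Edge i j) :: _ \<Rightarrow> _ \<Rightarrow> 'k::field) \<notin> wedge2_center V A"
  unfolding wedge2_center_def wedge_def by auto

locale ordered_graph =
  fixes V :: "'v::linorder set" and A :: "('v \<times> 'v) set"
  assumes finite_V: "finite V"
    and edges_ordered: "A \<subseteq> {(i, j). i \<in> V \<and> j \<in> V \<and> i < j}"
begin

lemma edge_less: "(i, j) \<in> A \<Longrightarrow> i < j"
  and edge_in_V: "(i, j) \<in> A \<Longrightarrow> i \<in> V" "(i, j) \<in> A \<Longrightarrow> j \<in> V"
  using edges_ordered by auto

lemma adjacent_in_V: "adjacent A u v \<Longrightarrow> u \<in> V"
  unfolding adjacent_def using edge_in_V by blast

lemma finite_gbasis: "finite (gbasis V A)"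
proof -
  have "finite A"
    using finite_subset[of A "V \<times> V"] edges_ordered finite_V by auto
  then show ?thesis using finite_V unfolding gbasis_def by auto
qed

lemma ad2_Vert_Edge:
  assumes "(i, j) \<in> A"
  shows "ad2 V A (unitvec (Vert a)) w (Vert c) (Edge i j)
       = (if a = i then w (Vert c) (Vert j) else 0) - (if a = j then w (Vert c) (Vert i) else 0)"
  using sum_gbr_unitvec_Vert[OF finite_gbasis _ _ assms, of "w (Vert c)" a] assms edge_in_V
  by (simp add: ad2_eq_sum)

lemma ad2_Edge_Edge:
  assumes "(i, j) \<in> A" "(k, l) \<in> A"
  shows "ad2 V A (unitvec (Vert a)) w (Edge i j) (Edge k l)
       = ((if a = i then w (Vert j) (Edge k l) else 0) - (if a = j then w (Vert i) (Edge k l) else 0))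
       + ((if a = k then w (Edge i j) (Vert l) else 0) - (if a = l then w (Edge i j) (Vert k) else 0))"
  using sum_gbr_unitvec_Vert[OF finite_gbasis _ _ assms(1), of "\<lambda>b. w b (Edge k l)" a]
    sum_gbr_unitvec_Vert[OF finite_gbasis _ _ assms(2), of "w (Edge i j)" a] assms edge_in_V
  by (simp add: ad2_eq_sum)

lemma invariant_Edge_Edge:
  assumes w: "w \<in> invariants V A" and "a \<in> V" "(i, j) \<in> A" "(k, l) \<in> A"
  shows "(if a = i then w (Vert j) (Edge k l) else 0) - (if a = j then w (Vert i) (Edge k l) else 0)
       = (if a = k then w (Vert l) (Edge i j) else 0) - (if a = l then w (Vert k) (Edge i j) else 0)"
proof -
  have "(if a = k then w (Edge i j) (Vert l) else 0) = - (if a = k then w (Vert l) (Edge i j) else 0)"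
    and "(if a = l then w (Edge i j) (Vert k) else 0) = - (if a = l then w (Vert k) (Edge i j) else 0)"
    using invariants_antisym[OF w, of "Edge i j"] by simp_all
  then show ?thesis
    using invariants_ad2_Vert[OF assms(1,2)] ad2_Edge_Edge[OF assms(3,4), of a w]
    by (simp only:) (simp add: algebra_simps split del: if_split)
qed

lemma invariant_Vert_Vert:
  assumes w: "w \<in> invariants V A" and "adjacent A u t"
  shows "w (Vert c) (Vert u) = 0"
  using assms(2) unfolding adjacent_def
proof
  assume e: "(u, t) \<in> A"
  then have "t \<noteq> u" by (auto dest: edge_less)
  with invariants_ad2_Vert[OF w edge_in_V(2)[OF e]] ad2_Vert_Edge[OF e, of t w c]
  show ?thesis by simp
next
  assume e: "(t, u) \<in> A"
  then have "t \<noteq> u" by (auto dest: edge_less)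
  with invariants_ad2_Vert[OF w edge_in_V(1)[OF e]] ad2_Vert_Edge[OF e, of t w c]
  show ?thesis by simp
qed

lemma invariant_Vert_Edge_neighbour:
  assumes w: "w \<in> invariants V A" and "adjacent A a v" "(k, l) \<in> A" "a \<noteq> k" "a \<noteq> l"
  shows "w (Vert v) (Edge k l) = 0"
  using assms(2) unfolding adjacent_def
proof
  assume e: "(a, v) \<in> A"
  then have "a \<noteq> v" by (auto dest: edge_less)
  with invariant_Edge_Edge[OF w edge_in_V(1)[OF e] e assms(3)] assms(4,5)
  show ?thesis by simp
next
  assume e: "(v, a) \<in> A"
  then have "a \<noteq> v" by (auto dest: edge_less)
  with invariant_Edge_Edge[OF w edge_in_V(2)[OF e] e assms(3)] assms(4,5)
  show ?thesis by simp
qed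

lemma invariant_triangle:
  fixes w :: "'v gbasis \<Rightarrow> 'v gbasis \<Rightarrow> 'k::field_char_0"
  assumes w: "w \<in> invariants V A" and e12: "(t1, t2) \<in> A" and e13: "(t1, t3) \<in> A"
    and e23: "(t2, t3) \<in> A"
  shows "w (Vert t1) (Edge t2 t3) = 0 \<and> w (Vert t2) (Edge t1 t3) = 0 \<and> w (Vert t3) (Edge t1 t2) = 0"
proof -
  have "t1 < t2" "t2 < t3" using e12 e23 by (auto dest: edge_less)
  then have distinct: "t1 \<noteq> t2" "t2 \<noteq> t1" "t1 \<noteq> t3" "t3 \<noteq> t1" "t2 \<noteq> t3" "t3 \<noteq> t2" by auto
  define a b c where "a = w (Vert t1) (Edge t2 t3)" "b = w (Vert t2) (Edge t1 t3)"
    "c = w (Vert t3) (Edge t1 t2)"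
  have "b = c" using invariant_Edge_Edge[OF w edge_in_V(1)[OF e12] e12 e13] distinct
    unfolding a_b_c_def by simp
  moreover have "- a = c" using invariant_Edge_Edge[OF w edge_in_V(2)[OF e12] e12 e23] distinct
    unfolding a_b_c_def by simp
  moreover have "a = b" using invariant_Edge_Edge[OF w edge_in_V(2)[OF e13] e13 e23] distinct
    unfolding a_b_c_def by simp
  ultimately have "a = 0" by simp
  with \<open>b = c\<close> \<open>- a = c\<close> \<open>a = b\<close> show ?thesis unfolding a_b_c_def by simp
qed

lemma invariant_Vert_Edge_triangle:
  fixes w :: "'v gbasis \<Rightarrow> 'v gbasis \<Rightarrow> 'k::field_char_0"
  assumes w: "w \<in> invariants V A" and "adjacent A v k" "adjacent A v l" "(k, l) \<in> A"
  shows "w (Vert v) (Edge k l) = 0"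
proof -
  have "k < l" using assms(4) by (rule edge_less)
  consider "v < k" | "k < v" "v < l" | "l < v"
    using assms(2,3) edge_less unfolding adjacent_def by (metis neqE)
  then show ?thesis
  proof cases
    case 1
    then have "(v, k) \<in> A" "(v, l) \<in> A"
      using assms(2,3) \<open>k < l\<close> edge_less unfolding adjacent_def by (meson less_asym less_trans)+
    then show ?thesis using invariant_triangle[OF w _ _ assms(4)] by blast
  next
    case 2
    then have "(k, v) \<in> A" "(v, l) \<in> A"
      using assms(2,3) edge_less unfolding adjacent_def by (meson less_asym)+
    then show ?thesis using invariant_triangle[OF w _ assms(4)] by blast
  next
    case 3
    then have "(k, v) \<in> A" "(l, v) \<in> A"
      using assms(2,3) \<open>k < l\<close> edge_less unfolding adjacent_def by (meson less_asym less_trans)+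
    then show ?thesis using invariant_triangle[OF w assms(4)] by blast
  qed
qed

lemma invariant_Vert_Edge:
  fixes w :: "'v gbasis \<Rightarrow> 'v gbasis \<Rightarrow> 'k::field_char_0"
  assumes w: "w \<in> invariants V A" and "v \<in> V" "vdegree V A v \<ge> 2" "(k, l) \<in> A"
  shows "w (Vert v) (Edge k l) = 0"
proof (cases "\<exists>a. adjacent A a v \<and> a \<noteq> k \<and> a \<noteq> l")
  case True
  then show ?thesis using invariant_Vert_Edge_neighbour[OF w _ assms(4)] by blast
next
  case False
  define N where "N = {u \<in> V. adjacent A v u}"
  have "2 \<le> card N" using assms(3) unfolding N_def vdegree_def adjacent_def .
  moreover have N_sub: "N \<subseteq> {k, l}" using False unfolding N_def adjacent_def by auto
  moreover have "card N \<le> card {k, l}" using N_sub by (intro card_mono) auto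
  moreover have "card {k, l} \<le> 2" by (simp add: card_insert_le_m1)
  ultimately have "N = {k, l}" using card_subset_eq[of "{k, l}" N] by simp
  then have "adjacent A v k" "adjacent A v l" unfolding N_def by auto
  then show ?thesis using invariant_Vert_Edge_triangle[OF w _ _ assms(4)] by blast
qed

lemma invariants_subset_wedge2_center:
  assumes no_isolated: "\<forall>v\<in>V. \<exists>u. adjacent A v u" and deg: "\<forall>v\<in>V. vdegree V A v \<ge> 2"
  shows "(invariants V A :: ('v gbasis \<Rightarrow> 'v gbasis \<Rightarrow> 'k::field_char_0) set) \<subseteq> wedge2_center V A"
proof
  fix w :: "'v gbasis \<Rightarrow> 'v gbasis \<Rightarrow> 'k"
  assume w: "w \<in> invariants V A"
  have Vert_zero: "w (Vert v) c = 0" for v c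
  proof (cases "v \<in> V \<and> c \<in> gbasis V A")
    case True
    show ?thesis
    proof (cases c)
      case (Vert u)
      then obtain t where "adjacent A u t" using True no_isolated by auto
      then show ?thesis using invariant_Vert_Vert[OF w] Vert by blast
    next
      case (Edge k l)
      then show ?thesis using True deg invariant_Vert_Edge[OF w] by auto
    qed
  qed (auto intro: invariants_outside_gbasis[OF w])
  have "w b c = 0" if "b \<notin> center_basis A" for b c
  proof (cases b)
    case (Edge k l)
    then show ?thesis using that invariants_outside_gbasis[OF w] by simp
  qed (simp add: Vert_zero)
  then have "w b c = 0" if "b \<notin> center_basis A \<or> c \<notin> center_basis A" for b c
    using that invariants_antisym[OF w, of b c] by auto
  then show "w \<in> wedge2_center V A"
    using w unfolding invariants_def wedge2_center_def by simp
qed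

lemma wedge_leaf_invariant:
  assumes "v \<in> V" "(e1, e2) \<in> A"
    and leaf: "\<And>i j. (i, j) \<in> A \<Longrightarrow> i = v \<or> j = v \<Longrightarrow> i = e1 \<and> j = e2"
  shows "(wedge (Vert v) (Edge e1 e2) :: _ \<Rightarrow> _ \<Rightarrow> 'k::field) \<in> invariants V A"
proof -
  let ?W = "wedge (Vert v) (Edge e1 e2) :: _ \<Rightarrow> _ \<Rightarrow> 'k"
  have "?W \<in> wedge2 V A" unfolding wedge2_def wedge_def using assms(1,2) by auto
  moreover have "ad2 V A x ?W = (\<lambda>p q. 0)" for x
  proof (intro ext)
    fix p q
    define G where "G = gbr A x (unitvec (Vert v))"
    have G_zero: "G r = 0" if "r \<noteq> Edge e1 e2" for r
      using that leaf unfolding G_def gbr_def unitvec_def by (auto split: gbasis.splits)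
    have "?W b q * gbr A x (unitvec b) p + ?W p b * gbr A x (unitvec b) q = 0" for b
    proof (cases b)
      case (Vert u)
      then show ?thesis using G_zero unfolding wedge_def G_def by auto
    qed simp
    then show "ad2 V A x ?W p q = 0" unfolding ad2_def by simp
  qed
  ultimately show ?thesis unfolding invariants_def by simp
qed

lemma leaf_unique_edge:
  assumes "v \<in> V" "vdegree V A v < 2" "adjacent A v u"
  obtains e1 e2 where "(e1, e2) \<in> A"
    "\<And>i j. (i, j) \<in> A \<Longrightarrow> i = v \<or> j = v \<Longrightarrow> i = e1 \<and> j = e2"
proof -
  define N where "N = {u \<in> V. adjacent A v u}"
  have "card N \<le> 1" using assms(2) unfolding N_def vdegree_def adjacent_def by simp
  then have single: "x = y" if "x \<in> N" "y \<in> N" for x y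
    using that card_le_Suc0_iff_eq[of N] finite_V unfolding N_def by auto
  have in_N: "x \<in> N" if "adjacent A v x" for x
    using that adjacent_in_V[of x v] adjacent_sym[of A v x] unfolding N_def by simp
  have neighbour_eq_u: "x = u" if "adjacent A v x" for x
    using single[OF in_N in_N] that assms(3) .
  have other_end: "i = v \<and> j = u \<or> i = u \<and> j = v" if "(i, j) \<in> A" "i = v \<or> j = v" for i j
    using that(2)
  proof
    assume "i = v"
    with that(1) have "adjacent A v j" unfolding adjacent_def by simp
    with \<open>i = v\<close> show ?thesis using neighbour_eq_u by simp
  next
    assume "j = v"
    with that(1) have "adjacent A v i" unfolding adjacent_def by simp
    with \<open>j = v\<close> show ?thesis using neighbour_eq_u by simp
  qed
  have no_loop: "\<not> ((v, u) \<in> A \<and> (u, v) \<in> A)"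
    using edge_less less_asym by blast
  show ?thesis
  proof (cases "(v, u) \<in> A")
    case True
    then show ?thesis using that other_end no_loop by blast
  next
    case False
    then have "(u, v) \<in> A" using assms(3) unfolding adjacent_def by simp
    then show ?thesis using that other_end no_loop by blast
  qed
qed

end

theorem mainTheorem10:
  fixes V :: "'v::linorder set" and A :: "('v \<times> 'v) set"
  assumes "finite V"
    and "A \<subseteq> {(i, j). i \<in> V \<and> j \<in> V \<and> i < j}"
    and "\<forall>v\<in>V. \<exists>u\<in>V. (v, u) \<in> A \<or> (u, v) \<in> A"
  shows "(invariants V A :: ('v gbasis \<Rightarrow> 'v gbasis \<Rightarrow> 'k::field_char_0) set)
           = wedge2_center V A
         \<longleftrightarrow> (\<forall>v\<in>V. vdegree V A v \<ge> 2)"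
proof -
  interpret ordered_graph V A using assms(1,2) by unfold_locales
  have no_isolated: "\<forall>v\<in>V. \<exists>u. adjacent A v u" using assms(3) unfolding adjacent_def by blast
  show ?thesis
  proof
    assume "\<forall>v\<in>V. vdegree V A v \<ge> 2"
    then show "(invariants V A :: (_ \<Rightarrow> _ \<Rightarrow> 'k) set) = wedge2_center V A"
      using invariants_subset_wedge2_center[OF no_isolated] wedge2_center_subset_invariants
      by blast
  next
    assume eq: "(invariants V A :: (_ \<Rightarrow> _ \<Rightarrow> 'k) set) = wedge2_center V A"
    show "\<forall>v\<in>V. vdegree V A v \<ge> 2"
    proof (rule ccontr)
      assume "\<not> (\<forall>v\<in>V. vdegree V A v \<ge> 2)"
      then obtain v u where v: "v \<in> V" "vdegree V A v < 2" "adjacent A v u"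
        using no_isolated by (meson not_le)
      obtain e1 e2 where "(e1, e2) \<in> A"
        "\<And>i j. (i, j) \<in> A \<Longrightarrow> i = v \<or> j = v \<Longrightarrow> i = e1 \<and> j = e2"
        using leaf_unique_edge[OF v] by blast
      then have "(wedge (Vert v) (Edge e1 e2) :: _ \<Rightarrow> _ \<Rightarrow> 'k) \<in> invariants V A"
        by (intro wedge_leaf_invariant[OF v(1)])
      then show False
        using eq wedge_Vert_Edge_notin_wedge2_center[of v e1 e2 V A, where 'k = 'k] by simp
    qed
  qed
qed

end
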